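(* Let $\alpha\in(0,1)$, $t\ge0$, $\Delta\in[0,1/2]$ with $t>0$ or $\Delta<1/2$. Let $\hat\theta_1,\dots,\hat\theta_{B^*}$ in the Unimodal HulC procedure be independent, continuously distributed, computed from approximately equal-sized disjoint parts of the data, and suppose there are $r_{n,\alpha}>0$, $\delta_{n,\alpha}\ge0$ and a continuous random variable $W$, unimodal at $0$, with $\Delta=|\tfrac12-\mathbb{P}(W\le0)|$, such that for every $j$, \[ \sup_{u\in\mathbb{R}}\big|\mathbb{P}(r_{n,\alpha}(\hat\theta_j-\theta_0)\le u)-\mathbb{P}(W\le u)\big|\le\delta_{n,\alpha}. \] Then $\mathbb{P}(\theta_0\notin\widehat{\mathrm{CI}}^{\mathrm{mode}}_\alpha)\le\alpha\big(1-10B_{\alpha,t,\Delta}(1+t)\delta_{n,\alpha}\big)_+^{-1}$ (interpreted as $+\infty$ when the denominator is $0$).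
   Context: For integer $B\ge0$ and $\Delta\in[0,1/2]$, $P(B;\Delta):=(\tfrac12-\Delta)^B+(\tfrac12+\Delta)^B$. $Q(B;t,\Delta):=P(B;\Delta)(1+t)^{-B+1}$ and $B_{\alpha,t,\Delta}$ is the smallest integer $B\ge1$ with $Q(B;t,\Delta)\le\alpha$. A random variable $W$ is unimodal at $0$ if its distribution function is convex on $(-\infty,0]$ and concave on $[0,\infty)$. Unimodal HulC procedure: with $B=B_{\alpha,t,\Delta}$, set $\eta_{\alpha,t}:=\frac{Q(B-1;t,\Delta)-\alpha}{Q(B-1;t,\Delta)-Q(B;t,\Delta)}$; draw $U\sim\mathrm{Unif}[0,1]$ independent of the data and set $B^*=B$ if $U\le\eta_{\alpha,t}$, else $B^*=B-1$; split the data randomly into $B^*$ disjoint parts of approximately equal size, compute $\hat\theta_j$ (an estimate of $\theta_0\in\mathbb{R}$) on part $j$, let $\hat\theta_{\max}=\max_j\hat\theta_j$, $\hat\theta_{\min}=\min_j\hat\theta_j$, and output $\widehat{\mathrm{CI}}^{\mathrm{mode}}_\alpha:=[\hat\theta_{\min}-t(\hat\theta_{\max}-\hat\theta_{\min}),\ \hat\theta_{\max}+t(\hat\theta_{\max}-\hat\theta_{\min})]$. *)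

theory Defs
  imports "HOL-Probability.Probability"
begin

definition hulcP :: "nat \<Rightarrow> real \<Rightarrow> real" where
  "hulcP B \<Delta> = (1/2 - \<Delta>) ^ B + (1/2 + \<Delta>) ^ B"

definition hulcQ :: "nat \<Rightarrow> real \<Rightarrow> real \<Rightarrow> real" where
  "hulcQ B t \<Delta> = hulcP B \<Delta> * (1 + t) powi (1 - int B)"

definition hulcB :: "real \<Rightarrow> real \<Rightarrow> real \<Rightarrow> nat" where
  "hulcB \<alpha> t \<Delta> = (LEAST B. 1 \<le> B \<and> hulcQ B t \<Delta> \<le> \<alpha>)"

definition hulc_eta :: "real \<Rightarrow> real \<Rightarrow> real \<Rightarrow> real" where
  "hulc_eta \<alpha> t \<Delta> =
     (let B = hulcB \<alpha> t \<Delta> in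
      (hulcQ (B - 1) t \<Delta> - \<alpha>) / (hulcQ (B - 1) t \<Delta> - hulcQ B t \<Delta>))"

definition est_max :: "nat \<Rightarrow> (nat \<Rightarrow> real) \<Rightarrow> real" where
  "est_max k \<theta> = Max (\<theta> ` {..<k})"

definition est_min :: "nat \<Rightarrow> (nat \<Rightarrow> real) \<Rightarrow> real" where
  "est_min k \<theta> = Min (\<theta> ` {..<k})"

definition ci_mode :: "real \<Rightarrow> nat \<Rightarrow> (nat \<Rightarrow> real) \<Rightarrow> real set" where
  "ci_mode t k \<theta> =
     {est_min k \<theta> - t * (est_max k \<theta> - est_min k \<theta>) ..
      est_max k \<theta> + t * (est_max k \<theta> - est_min k \<theta>)}"

definition hulc_Bstar :: "real \<Rightarrow> real \<Rightarrow> real \<Rightarrow> real \<Rightarrow> nat" where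
  "hulc_Bstar \<alpha> t \<Delta> u =
     (if u \<le> hulc_eta \<alpha> t \<Delta> then hulcB \<alpha> t \<Delta> else hulcB \<alpha> t \<Delta> - 1)"

definition unimodal_at_0 :: "'b measure \<Rightarrow> ('b \<Rightarrow> real) \<Rightarrow> bool" where
  "unimodal_at_0 N W \<longleftrightarrow>
     (let F = (\<lambda>x. measure N {w \<in> space N. W w \<le> x}) in
      convex_on {..0} F \<and> concave_on {0..} F)"

end

theory Submission
  imports Defs
begin

(* Write X j = r * (theta j - theta0) and c = t / (1 + t). If theta0 misses the interval built
   from k estimates, then c * X i < X j for all i, j, or the same holds for - X. On such a ratio
   event the largest X i is positive. Cutting [0, oo) at quantiles x l of the limit distribution
   function G at equally spaced levels, X i lies in a layer (x (l - 1), x l] and every other X j in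
   the band (c * x (l - 1), x l], whose G-mass is controlled by the concavity of G on [0, oo).
   Independence turns each such event into a product, the sum over the layers is a Riemann sum of
   a power, and refining the grid gives ((1 - c) * (1 - G 0) + 2 * delta) ^ k / (1 - c) plus a
   first-order correction. Unimodality makes the reflected distribution function concave too; the
   two bounds together are at most Q(k) / (1 - 10 * k * (1 + t) * delta), and the randomisation
   between B - 1 and B splits mixes Q(B - 1) and Q(B) into exactly alpha. *)

section \<open>Elementary inequalities\<close>

lemma power_increment_lower:
  fixes u d :: real
  assumes "0 \<le> u" "0 \<le> d"
  shows "real k * d * u ^ (k - 1) \<le> (u + d) ^ k - u ^ k"
proof (induction k)
  case (Suc m)
  have "(u + d) ^ Suc m - u ^ Suc m = (u + d) * ((u + d) ^ m - u ^ m) + d * u ^ m"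
    by (simp add: algebra_simps)
  also have "\<dots> \<ge> u * (real m * d * u ^ (m - 1)) + d * u ^ m"
    using Suc.IH assms by (intro add_right_mono mult_mono) auto
  also have "u * (real m * d * u ^ (m - 1)) = real m * d * u ^ m"
    by (cases m) (simp_all add: algebra_simps)
  finally show ?case by (simp add: algebra_simps)
qed simp

lemma power_increment_upper:
  fixes u d :: real
  assumes "0 \<le> u" "0 \<le> d"
  shows "(u + d) ^ k - u ^ k \<le> real k * d * (u + d) ^ (k - 1)"
proof (induction k)
  case (Suc m)
  have "(u + d) ^ Suc m - u ^ Suc m = u * ((u + d) ^ m - u ^ m) + d * (u + d) ^ m"
    by (simp add: algebra_simps)
  also have "\<dots> \<le> (u + d) * (real m * d * (u + d) ^ (m - 1)) + d * (u + d) ^ m"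
    using Suc.IH assms by (intro add_right_mono mult_mono) (auto intro: power_mono)
  also have "(u + d) * (real m * d * (u + d) ^ (m - 1)) = real m * d * (u + d) ^ m"
    by (cases m) (simp_all add: algebra_simps)
  finally show ?case by (simp add: algebra_simps)
qed simp

lemma power_sum_le_twice_next_power_sum:
  fixes x y :: real
  assumes "0 \<le> x" "0 \<le> y" "1 \<le> x + y"
  shows "x ^ m + y ^ m \<le> 2 * (x ^ Suc m + y ^ Suc m)"
proof -
  have "0 \<le> (x - y) * (x ^ m - y ^ m)"
    using assms power_mono[of x y m] power_mono[of y x m]
    by (cases "x \<le> y") (auto intro: mult_nonpos_nonpos)
  then have "(x + y) * (x ^ m + y ^ m) \<le> 2 * (x ^ Suc m + y ^ Suc m)"
    by (simp add: algebra_simps)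
  moreover have "x ^ m + y ^ m \<le> (x + y) * (x ^ m + y ^ m)"
    using assms mult_right_mono[of 1 "x + y" "x ^ m + y ^ m"] by simp
  ultimately show ?thesis by linarith
qed

lemma power_pair_perturbation_le:
  fixes p q \<epsilon> :: real
  assumes "0 \<le> p" "0 \<le> q" "p + q = 1" "0 \<le> \<epsilon>" "1 \<le> k" "10 * real k * \<epsilon> < 1"
  shows "(p + 2 * \<epsilon>) ^ k + (q + 2 * \<epsilon>) ^ k + real k * \<epsilon> * ((p + 2 * \<epsilon>) ^ (k - 1) + (q + 2 * \<epsilon>) ^ (k - 1))
    \<le> (p ^ k + q ^ k) / (1 - 10 * real k * \<epsilon>)"
proof -
  define S where "S = (p + 2 * \<epsilon>) ^ k + (q + 2 * \<epsilon>) ^ k"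
  define R where "R = (p + 2 * \<epsilon>) ^ (k - 1) + (q + 2 * \<epsilon>) ^ (k - 1)"
  define T where "T = p ^ k + q ^ k"
  have "R \<le> 2 * S"
    using power_sum_le_twice_next_power_sum[of "p + 2 * \<epsilon>" "q + 2 * \<epsilon>" "k - 1"] assms
    by (simp add: R_def S_def)
  then have kR: "real k * \<epsilon> * R \<le> 2 * real k * \<epsilon> * S"
    using assms mult_left_mono[of R "2 * S" "real k * \<epsilon>"] by simp
  have "S - T \<le> 2 * real k * \<epsilon> * R"
    using power_increment_upper[of p "2 * \<epsilon>" k] power_increment_upper[of q "2 * \<epsilon>" k] assms
    by (simp add: S_def T_def R_def algebra_simps)
  with kR have ST: "S * (1 - 4 * real k * \<epsilon>) \<le> T"
    by (simp add: algebra_simps)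
  have "0 \<le> S" using assms by (simp add: S_def)
  have "(S + real k * \<epsilon> * R) * (1 - 10 * real k * \<epsilon>)
      \<le> S * (1 + 2 * real k * \<epsilon>) * (1 - 10 * real k * \<epsilon>)"
    using kR assms by (intro mult_right_mono) (auto simp: algebra_simps)
  also have "\<dots> = S * ((1 + 2 * real k * \<epsilon>) * (1 - 10 * real k * \<epsilon>))"
    by simp
  also have "\<dots> \<le> S * (1 - 4 * real k * \<epsilon>)"
    using \<open>0 \<le> S\<close> assms by (intro mult_left_mono) (auto simp: algebra_simps)
  finally have "(S + real k * \<epsilon> * R) * (1 - 10 * real k * \<epsilon>) \<le> T"
    using ST by linarith
  then show ?thesis
    using assms by (simp add: S_def R_def T_def pos_le_divide_eq algebra_simps)
qed

lemma summation_by_parts_le: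
  fixes e b :: "nat \<Rightarrow> real"
  assumes "1 \<le> n" and e: "\<And>l. l \<le> n \<Longrightarrow> -d \<le> e l"
    and b: "\<And>l. 1 \<le> l \<Longrightarrow> l < n \<Longrightarrow> b l \<le> b (Suc l)" and "0 \<le> b 1"
  shows "(\<Sum>l=1..n. (e l - e (l - 1)) * b l) \<le> (e n + d) * b n"
proof -
  have "(\<Sum>l=1..m. (e l - e (l - 1)) * b l) \<le> (e m + d) * b m" if "1 \<le> m" "m \<le> n" for m
    using that
  proof (induction m rule: nat_induct_at_least)
    case base
    have "- e 0 * b 1 \<le> d * b 1" using e[of 0] assms(4) by (intro mult_right_mono) auto
    then show ?case by (simp add: algebra_simps)
  next
    case (Suc m)
    have "(e m + d) * b m \<le> (e m + d) * b (Suc m)"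
      using e[of m] b[of m] Suc.hyps Suc.prems by (intro mult_left_mono) auto
    with Suc show ?case by (simp add: algebra_simps)
  qed
  then show ?thesis using assms(1) by simp
qed

lemma sum_power_le_integral:
  fixes a h e :: real
  assumes "0 < a" "0 \<le> h" "0 \<le> e" "1 \<le> k"
  shows "(\<Sum>l=1..n. h * (e + a * real (l - 1) * h) ^ (k - 1)) \<le> (e + a * real n * h) ^ k / (a * real k)"
proof (induction n)
  case (Suc n)
  define u where "u = e + a * real n * h"
  have "real k * (a * h) * u ^ (k - 1) \<le> (u + a * h) ^ k - u ^ k"
    using power_increment_lower[of u "a * h" k] assms by (simp add: u_def)
  moreover have "u + a * h = e + a * real (Suc n) * h" by (simp add: u_def algebra_simps)
  ultimately have "h * u ^ (k - 1) \<le> (e + a * real (Suc n) * h) ^ k / (a * real k) - u ^ k / (a * real k)"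
    using assms by (simp add: field_simps)
  moreover have "(\<Sum>l=1..Suc n. h * (e + a * real (l - 1) * h) ^ (k - 1))
      = (\<Sum>l=1..n. h * (e + a * real (l - 1) * h) ^ (k - 1)) + h * u ^ (k - 1)"
    by (simp add: u_def)
  moreover have "(\<Sum>l=1..n. h * (e + a * real (l - 1) * h) ^ (k - 1)) \<le> u ^ k / (a * real k)"
    using Suc.IH by (simp add: u_def)
  ultimately show ?case by linarith
qed (use assms in simp)

(* a = 1 - c and p = 1 - G 0 in the bound for the event that c * X i < X j for all i, j < k. *)
definition ratio_event_bound :: "nat \<Rightarrow> real \<Rightarrow> real \<Rightarrow> real \<Rightarrow> real" where
  "ratio_event_bound k a \<delta> p = (a * p + 2 * \<delta>) ^ k / a + real k * \<delta> * (a * p + 2 * \<delta>) ^ (k - 1)"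

lemma ratio_event_bound_scaled_le:
  fixes a \<delta> x :: real
  assumes "0 < a" "a \<le> 1" "0 \<le> \<delta>" "0 \<le> x" "1 \<le> k"
  shows "ratio_event_bound k a \<delta> x
    \<le> a ^ (k - 1) * ((x + 2 * (\<delta> / a)) ^ k + real k * (\<delta> / a) * (x + 2 * (\<delta> / a)) ^ (k - 1))"
proof -
  define y where "y = x + 2 * (\<delta> / a)"
  have scale: "a * x + 2 * \<delta> = a * y"
    using assms by (simp add: y_def field_simps)
  have ak: "a ^ k = a * a ^ (k - 1)"
    using assms by (metis Suc_diff_le diff_Suc_1 power_Suc)
  have first: "(a * y) ^ k / a = a ^ (k - 1) * y ^ k"
    using assms by (simp add: power_mult_distrib ak)
  have "real k * \<delta> * (a * y) ^ (k - 1) = a * (a ^ (k - 1) * (real k * (\<delta> / a) * y ^ (k - 1)))"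
    using assms by (simp add: power_mult_distrib)
  also have "\<dots> \<le> a ^ (k - 1) * (real k * (\<delta> / a) * y ^ (k - 1))"
    using assms by (intro mult_left_le_one_le) (auto simp: y_def)
  finally show ?thesis
    unfolding ratio_event_bound_def scale first y_def[symmetric] by (simp add: algebra_simps)
qed

lemma ratio_event_bound_pair_le:
  fixes a \<delta> p q :: real
  assumes "0 < a" "a \<le> 1" "0 \<le> \<delta>" "0 \<le> p" "0 \<le> q" "p + q = 1" "1 \<le> k"
    and "10 * real k * \<delta> < a"
  shows "ratio_event_bound k a \<delta> p + ratio_event_bound k a \<delta> q
    \<le> (p ^ k + q ^ k) * a ^ (k - 1) / (1 - 10 * real k * (\<delta> / a))"
proof -
  have small: "10 * real k * (\<delta> / a) < 1"
    using assms by (simp add: field_simps)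
  have "ratio_event_bound k a \<delta> p + ratio_event_bound k a \<delta> q
      \<le> a ^ (k - 1) * ((p + 2 * (\<delta> / a)) ^ k + (q + 2 * (\<delta> / a)) ^ k + real k * (\<delta> / a)
          * ((p + 2 * (\<delta> / a)) ^ (k - 1) + (q + 2 * (\<delta> / a)) ^ (k - 1)))"
    using ratio_event_bound_scaled_le[of a \<delta> p k] ratio_event_bound_scaled_le[of a \<delta> q k] assms
    by (simp add: algebra_simps)
  also have "\<dots> \<le> a ^ (k - 1) * ((p ^ k + q ^ k) / (1 - 10 * real k * (\<delta> / a)))"
    using power_pair_perturbation_le[of p q "\<delta> / a" k] small assms
    by (intro mult_left_mono) auto
  finally show ?thesis by (simp add: mult.commute)
qed

section \<open>The constants and the interval of the procedure\<close>

lemma hulcQ_eq: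
  assumes "0 \<le> t" "1 \<le> n"
  shows "hulcQ n t \<Delta> = hulcP n \<Delta> / (1 + t) ^ (n - 1)"
proof -
  have "(1 + t) powi (1 - int n) = inverse ((1 + t) ^ (n - 1))"
    using assms by (simp add: power_int_diff power_int_minus power_int_of_nat field_simps
      flip: power_Suc)
  then show ?thesis by (simp add: hulcQ_def divide_inverse)
qed

lemma hulcP_eq:
  fixes p q :: real
  assumes "p + q = 1" "\<Delta> = \<bar>1/2 - q\<bar>"
  shows "hulcP k \<Delta> = p ^ k + q ^ k"
proof -
  have "p = 1 - q" using assms(1) by simp
  then show ?thesis
    using assms(2) by (cases "q \<le> 1/2") (simp_all add: hulcP_def add.commute)
qed

lemma hulcQ_le_alpha_exists:
  fixes \<alpha> t \<Delta> :: real
  assumes "0 < \<alpha>" "0 \<le> t" "0 \<le> \<Delta>" "\<Delta> \<le> 1/2" "0 < t \<or> \<Delta> < 1/2"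
  shows "\<exists>B. 1 \<le> B \<and> hulcQ B t \<Delta> \<le> \<alpha>"
proof -
  define \<rho> where "\<rho> = (1/2 + \<Delta>) / (1 + t)"
  have "0 \<le> \<rho>" "\<rho> < 1" using assms by (auto simp: \<rho>_def field_simps)
  then obtain n where n: "\<rho> ^ n < \<alpha> / (2 * (1 + t))"
    using real_arch_pow_inv[of "\<alpha> / (2 * (1 + t))" \<rho>] assms by auto
  have "hulcP (Suc n) \<Delta> \<le> 2 * (1/2 + \<Delta>) ^ Suc n"
    using assms power_mono[of "1/2 - \<Delta>" "1/2 + \<Delta>" "Suc n"] by (simp add: hulcP_def)
  then have "hulcQ (Suc n) t \<Delta> \<le> 2 * (1/2 + \<Delta>) ^ Suc n / (1 + t) ^ n"
    using assms by (simp add: hulcQ_eq divide_right_mono)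
  also have "\<dots> = (1 + t) * (2 * (1/2 + \<Delta>) ^ Suc n) / ((1 + t) * (1 + t) ^ n)"
    using assms by (intro nonzero_mult_divide_mult_cancel_left[symmetric]) auto
  also have "\<dots> = 2 * (1 + t) * \<rho> ^ Suc n"
    by (simp only: \<rho>_def power_divide power_Suc[of "1 + t"] times_divide_eq_right mult_ac)
  also have "\<dots> \<le> 2 * (1 + t) * \<rho> ^ n"
    using \<open>0 \<le> \<rho>\<close> \<open>\<rho> < 1\<close> assms by (intro mult_left_mono power_decreasing) auto
  also have "\<dots> < \<alpha>" using n assms by (simp add: field_simps)
  finally show ?thesis by (intro exI[of _ "Suc n"]) simp
qed

lemma hulcB_bounds:
  fixes \<alpha> t \<Delta> :: real
  assumes "0 < \<alpha>" "\<alpha> < 1" "0 \<le> t" "0 \<le> \<Delta>" "\<Delta> \<le> 1/2" "0 < t \<or> \<Delta> < 1/2"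
  shows "2 \<le> hulcB \<alpha> t \<Delta>" "hulcQ (hulcB \<alpha> t \<Delta>) t \<Delta> \<le> \<alpha>"
    "\<alpha> < hulcQ (hulcB \<alpha> t \<Delta> - 1) t \<Delta>"
proof -
  have least: "1 \<le> hulcB \<alpha> t \<Delta> \<and> hulcQ (hulcB \<alpha> t \<Delta>) t \<Delta> \<le> \<alpha>"
    using hulcQ_le_alpha_exists[OF assms(1) assms(3-6)] unfolding hulcB_def by (rule LeastI_ex)
  then show "hulcQ (hulcB \<alpha> t \<Delta>) t \<Delta> \<le> \<alpha>" by simp
  have "hulcQ 1 t \<Delta> = 1" by (simp add: hulcQ_def hulcP_def)
  with least assms show B2: "2 \<le> hulcB \<alpha> t \<Delta>"
    by (metis Suc_1 Suc_leI le_neq_implies_less not_le)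
  have "\<not> (1 \<le> hulcB \<alpha> t \<Delta> - 1 \<and> hulcQ (hulcB \<alpha> t \<Delta> - 1) t \<Delta> \<le> \<alpha>)"
    using B2 unfolding hulcB_def by (intro not_less_Least) simp
  then show "\<alpha> < hulcQ (hulcB \<alpha> t \<Delta> - 1) t \<Delta>" using B2 by auto
qed

lemma hulc_eta_mixture:
  fixes \<alpha> t \<Delta> :: real
  assumes "hulcQ (hulcB \<alpha> t \<Delta>) t \<Delta> \<le> \<alpha>" "\<alpha> < hulcQ (hulcB \<alpha> t \<Delta> - 1) t \<Delta>"
  shows "0 \<le> hulc_eta \<alpha> t \<Delta>" "hulc_eta \<alpha> t \<Delta> \<le> 1"
    "hulc_eta \<alpha> t \<Delta> * hulcQ (hulcB \<alpha> t \<Delta>) t \<Delta>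
       + (1 - hulc_eta \<alpha> t \<Delta>) * hulcQ (hulcB \<alpha> t \<Delta> - 1) t \<Delta> = \<alpha>"
proof -
  define Q1 Q0 where "Q1 = hulcQ (hulcB \<alpha> t \<Delta>) t \<Delta>" and "Q0 = hulcQ (hulcB \<alpha> t \<Delta> - 1) t \<Delta>"
  have eta: "hulc_eta \<alpha> t \<Delta> = (Q0 - \<alpha>) / (Q0 - Q1)"
    by (simp add: hulc_eta_def Let_def Q0_def Q1_def)
  have "Q1 \<le> \<alpha>" "\<alpha> < Q0" using assms by (simp_all add: Q0_def Q1_def)
  then show "0 \<le> hulc_eta \<alpha> t \<Delta>" "hulc_eta \<alpha> t \<Delta> \<le> 1"
    "hulc_eta \<alpha> t \<Delta> * Q1 + (1 - hulc_eta \<alpha> t \<Delta>) * Q0 = \<alpha>"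
    unfolding eta by (simp_all add: divide_simps) (simp add: algebra_simps)
qed

lemma ratio_event_bound_pair_le_hulcQ:
  fixes g t \<Delta> \<delta> :: real and k B :: nat
  assumes "0 \<le> g" "g \<le> 1" "\<Delta> = \<bar>1/2 - g\<bar>" "0 \<le> t" "0 \<le> \<delta>" "1 \<le> k" "k \<le> B"
    and small: "10 * real B * (1 + t) * \<delta> < 1"
  shows "ratio_event_bound k (1 / (1 + t)) \<delta> (1 - g) + ratio_event_bound k (1 / (1 + t)) \<delta> g
    \<le> hulcQ k t \<Delta> / (1 - 10 * real B * (1 + t) * \<delta>)"
proof -
  define a where "a = 1 / (1 + t)"
  have a: "0 < a" "a \<le> 1" "\<delta> / a = (1 + t) * \<delta>"
    using \<open>0 \<le> t\<close> by (auto simp: a_def field_simps)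
  have "hulcP k \<Delta> = (1 - g) ^ k + g ^ k"
    using assms(3) by (intro hulcP_eq) simp
  then have hQ: "hulcQ k t \<Delta> = ((1 - g) ^ k + g ^ k) * a ^ (k - 1)"
    unfolding hulcQ_eq[OF \<open>0 \<le> t\<close> \<open>1 \<le> k\<close>] a_def power_one_over by (simp only: divide_inverse)
  have "10 * real k * ((1 + t) * \<delta>) \<le> 10 * real B * ((1 + t) * \<delta>)"
    using assms by (intro mult_right_mono) auto
  then have kB: "10 * real k * (\<delta> / a) \<le> 10 * real B * (1 + t) * \<delta>"
    unfolding a(3) by (simp only: mult.assoc)
  have "ratio_event_bound k a \<delta> (1 - g) + ratio_event_bound k a \<delta> g
      \<le> hulcQ k t \<Delta> / (1 - 10 * real k * (\<delta> / a))"
    unfolding hQ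
  proof (rule ratio_event_bound_pair_le)
    have "10 * real k * (\<delta> / a) < 1"
      using kB small by linarith
    then show "10 * real k * \<delta> < a"
      using a(1) by (simp add: field_simps)
  qed (use a assms in auto)
  also have "\<dots> \<le> hulcQ k t \<Delta> / (1 - 10 * real B * (1 + t) * \<delta>)"
  proof (rule divide_left_mono)
    show "0 \<le> hulcQ k t \<Delta>"
      unfolding hQ using assms a by simp
    show "1 - 10 * real B * (1 + t) * \<delta> \<le> 1 - 10 * real k * (\<delta> / a)"
      using kB by simp
    show "0 < (1 - 10 * real k * (\<delta> / a)) * (1 - 10 * real B * (1 + t) * \<delta>)"
      using kB small by (intro mult_pos_pos) linarith+
  qed
  finally show ?thesis
    by (simp add: a_def)
qed

lemma not_in_ci_mode_ratio_cases:
  fixes \<theta> :: "nat \<Rightarrow> real"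
  assumes "0 \<le> t" "0 < r" "\<theta>0 \<notin> ci_mode t k \<theta>"
  shows "(\<forall>i<k. \<forall>j<k. t / (1 + t) * (r * (\<theta> i - \<theta>0)) < r * (\<theta> j - \<theta>0)) \<or>
    (\<forall>i<k. \<forall>j<k. t / (1 + t) * (- (r * (\<theta> i - \<theta>0))) < - (r * (\<theta> j - \<theta>0)))"
proof -
  define lo hi where "lo = est_min k \<theta>" and "hi = est_max k \<theta>"
  have lo: "lo \<le> \<theta> j" and hi: "\<theta> j \<le> hi" if "j < k" for j
    using that by (auto simp: lo_def hi_def est_min_def est_max_def)
  have scale: "t / (1 + t) * (r * y) < r * z" if "t * y < (1 + t) * z" for y z
    using mult_strict_left_mono[OF that assms(2)] assms(1) by (simp add: field_simps)
  have "\<theta>0 < lo - t * (hi - lo) \<or> hi + t * (hi - lo) < \<theta>0"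
    using assms(3) by (auto simp: ci_mode_def lo_def hi_def)
  then show ?thesis
  proof
    assume gap: "\<theta>0 < lo - t * (hi - lo)"
    have "t * (\<theta> i - \<theta>0) < (1 + t) * (\<theta> j - \<theta>0)" if "i < k" "j < k" for i j
    proof -
      have "t * (\<theta> i - \<theta>0) \<le> t * (hi - \<theta>0)"
        using hi[OF that(1)] assms(1) by (intro mult_left_mono) auto
      also have "\<dots> < (1 + t) * (lo - \<theta>0)"
        using gap by (simp add: algebra_simps)
      also have "\<dots> \<le> (1 + t) * (\<theta> j - \<theta>0)"
        using lo[OF that(2)] assms(1) by (intro mult_left_mono) auto
      finally show ?thesis .
    qed
    then show ?thesis by (intro disjI1 allI impI scale) simp
  next
    assume gap: "hi + t * (hi - lo) < \<theta>0"
    have "t * (- (\<theta> i - \<theta>0)) < (1 + t) * (- (\<theta> j - \<theta>0))" if "i < k" "j < k" for i j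
    proof -
      have "t * (- (\<theta> i - \<theta>0)) \<le> t * (\<theta>0 - lo)"
        using lo[OF that(1)] assms(1) by (intro mult_left_mono) auto
      also have "\<dots> < (1 + t) * (\<theta>0 - hi)"
        using gap by (simp add: algebra_simps)
      also have "\<dots> \<le> (1 + t) * (- (\<theta> j - \<theta>0))"
        using hi[OF that(2)] assms(1) by (intro mult_left_mono) auto
      finally show ?thesis .
    qed
    then have "t / (1 + t) * (- (r * (\<theta> i - \<theta>0))) < - (r * (\<theta> j - \<theta>0))"
      if "i < k" "j < k" for i j
      using scale that by (metis mult_minus_right)
    then show ?thesis by auto
  qed
qed

section \<open>Quantile grids\<close>

definition grid_below :: "nat \<Rightarrow> (nat \<Rightarrow> real) \<Rightarrow> nat \<Rightarrow> real set" where
  "grid_below N x l = (if l < N then {..x l} else UNIV)"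

lemma grid_below_mono:
  assumes "mono_on {..<N} x" "l \<le> l'"
  shows "grid_below N x l \<subseteq> grid_below N x l'"
  using assms by (auto simp: grid_below_def mono_on_def)

lemma ratio_event_grid_cover:
  fixes x y :: "nat \<Rightarrow> real"
  assumes "0 < k" "0 \<le> c" "c < 1" "0 < N" "x 0 \<le> 0"
    and ratio: "\<forall>i<k. \<forall>j<k. c * y i < y j"
  shows "\<exists>i<k. \<exists>l\<in>{1..N}. y i \<notin> grid_below N x (l - 1)
    \<and> (\<forall>j<k. y j \<in> grid_below N x l \<and> c * x (l - 1) < y j)"
proof -
  have "Max (y ` {..<k}) \<in> y ` {..<k}"
    using \<open>0 < k\<close> by (intro Max_in) auto
  then obtain i where i: "i < k" "y i = Max (y ` {..<k})"
    by auto
  then have imax: "y j \<le> y i" if "j < k" for j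
    using that by simp
  have "c * y i < y i"
    using ratio i(1) by blast
  then have "0 < (1 - c) * y i"
    by (simp add: algebra_simps)
  then have "0 < y i"
    using \<open>c < 1\<close> by (simp add: zero_less_mult_iff)
  define l where "l = (LEAST l. y i \<in> grid_below N x l)"
  have "y i \<in> grid_below N x N" by (simp add: grid_below_def)
  then have l_in: "y i \<in> grid_below N x l" and "l \<le> N"
    unfolding l_def by (auto intro: LeastI Least_le)
  have "l \<noteq> 0"
  proof
    assume "l = 0"
    then show False
      using l_in \<open>0 < y i\<close> \<open>0 < N\<close> \<open>x 0 \<le> 0\<close> by (simp add: grid_below_def)
  qed
  then have l_out: "y i \<notin> grid_below N x (l - 1)"
    unfolding l_def by (intro not_less_Least) (simp add: l_def[symmetric])
  then have "c * x (l - 1) \<le> c * y i"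
    using \<open>l \<le> N\<close> \<open>0 \<le> c\<close> by (intro mult_left_mono) (auto simp: grid_below_def split: if_splits)
  moreover have "y j \<in> grid_below N x l" if "j < k" for j
    using l_in imax[OF that] by (auto simp: grid_below_def split: if_splits)
  ultimately show ?thesis
    using i l_out \<open>l \<le> N\<close> \<open>l \<noteq> 0\<close> ratio by (intro exI[of _ i] conjI bexI[of _ l]) force+
qed

lemma continuous_reaches_level:
  fixes G :: "real \<Rightarrow> real"
  assumes cont: "continuous_on UNIV G" and lim: "(G \<longlongrightarrow> 1) at_top" and "G a \<le> y" "y < 1"
  shows "\<exists>z\<ge>a. G z = y"
proof -
  have "\<forall>\<^sub>F z in at_top. y < G z"
    by (rule order_tendstoD(1)[OF lim \<open>y < 1\<close>])
  then obtain b where "\<And>z. b \<le> z \<Longrightarrow> y < G z"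
    by (auto simp: eventually_at_top_linorder)
  then have "y \<le> G (max b a)" by (meson less_imp_le max.cobounded1)
  then show ?thesis
    using IVT'[of G a y "max b a"] continuous_on_subset[OF cont] \<open>G a \<le> y\<close> by fastforce
qed

(* A level equal to G 0 is allowed even when it is 1: it is attained at 0. *)
lemma continuous_level_grid:
  fixes G :: "real \<Rightarrow> real" and s :: "nat \<Rightarrow> real"
  assumes cont: "continuous_on UNIV G" and lim: "(G \<longlongrightarrow> 1) at_top"
    and s0: "s 0 = G 0" and "incseq s" and levels: "\<And>l. l \<le> n \<Longrightarrow> s l < 1 \<or> s l = G 0"
  shows "\<exists>x. x 0 = 0 \<and> mono_on {..n} x \<and> (\<forall>l\<le>n. G (x l) = s l)"
  using levels
proof (induction n)
  case 0
  then show ?case using s0 by (intro exI[of _ "\<lambda>_. 0"]) (auto simp: mono_on_def)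
next
  case (Suc n)
  then obtain x where x: "x 0 = 0" "mono_on {..n} x" "\<forall>l\<le>n. G (x l) = s l"
    by auto
  have "\<exists>z\<ge>x n. G z = s (Suc n)"
  proof (cases "s (Suc n) = s n")
    case False
    then have "s n < s (Suc n)"
      using incseq_SucD[OF \<open>incseq s\<close>, of n] by simp
    moreover have "G 0 \<le> s n"
      using incseqD[OF \<open>incseq s\<close>, of 0 n] s0 by simp
    ultimately show ?thesis
      using Suc.prems[of "Suc n"] x(3) by (intro continuous_reaches_level[OF cont lim]) auto
  qed (use x in auto)
  then obtain z where z: "x n \<le> z" "G z = s (Suc n)"
    by auto
  define x' where "x' = x(Suc n := z)"
  have "mono_on {..Suc n} x'"
    using x(2) z(1) mono_onD[OF x(2), of _ n]
    by (auto simp: x'_def mono_on_def le_Suc_eq intro: order_trans)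
  moreover have "x' 0 = 0" "\<forall>l\<le>Suc n. G (x' l) = s l"
    using x z by (auto simp: x'_def le_Suc_eq)
  ultimately show ?case by blast
qed

lemma reflected_cdf:
  fixes G :: "real \<Rightarrow> real"
  assumes cont: "continuous_on UNIV G" and bot: "(G \<longlongrightarrow> 0) at_bot" and conv: "convex_on {..0} G"
  shows "continuous_on UNIV (\<lambda>u. 1 - G (- u))"
    and "((\<lambda>u. 1 - G (- u)) \<longlongrightarrow> 1) at_top"
    and "concave_on {0..} (\<lambda>u. 1 - G (- u))"
proof -
  show "continuous_on UNIV (\<lambda>u. 1 - G (- u))"
    by (intro continuous_intros continuous_on_compose2[OF cont]) auto
  have "((\<lambda>u. G (- u)) \<longlongrightarrow> 0) at_top"
    by (rule filterlim_compose[OF bot filterlim_uminus_at_bot_at_top])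
  then show "((\<lambda>u. 1 - G (- u)) \<longlongrightarrow> 1) at_top"
    using tendsto_diff[OF tendsto_const, of _ 0 at_top 1] by simp
  have "convex_on {0..} (\<lambda>u. G (- u))"
  proof (rule convex_onI)
    fix s y z :: real assume "0 < s" "s < 1" "y \<in> {0..}" "z \<in> {0..}"
    then have "G ((1 - s) *\<^sub>R (- y) + s *\<^sub>R (- z)) \<le> (1 - s) * G (- y) + s * G (- z)"
      by (intro convex_onD[OF conv]) auto
    then show "G (- ((1 - s) *\<^sub>R y + s *\<^sub>R z)) \<le> (1 - s) * G (- y) + s * G (- z)"
      by (simp add: algebra_simps)
  qed simp
  then show "concave_on {0..} (\<lambda>u. 1 - G (- u))"
    by (intro concave_on_diff) (simp_all add: concave_on_const)
qed

section \<open>Samples with almost concave distribution functions\<close>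

lemma (in prob_space) prob_uminus_le:
  fixes Y :: "'a \<Rightarrow> real"
  assumes "Y \<in> borel_measurable M" and "prob {\<omega> \<in> space M. Y \<omega> = - u} = 0"
  shows "prob {\<omega> \<in> space M. - Y \<omega> \<le> u} = 1 - prob {\<omega> \<in> space M. Y \<omega> \<le> - u}"
proof -
  note [measurable] = assms(1)
  have "prob {\<omega> \<in> space M. - Y \<omega> \<le> u} = 1 - prob {\<omega> \<in> space M. Y \<omega> < - u}"
    by (subst prob_compl[symmetric]) (auto intro!: arg_cong[where f = prob])
  also have "prob {\<omega> \<in> space M. Y \<omega> < - u}
      = prob {\<omega> \<in> space M. Y \<omega> \<le> - u} - prob {\<omega> \<in> space M. Y \<omega> = - u}"
    by (subst finite_measure_Diff[symmetric]) (auto intro!: arg_cong[where f = prob])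
  finally show ?thesis using assms(2) by simp
qed

definition ratio_event :: "'a measure \<Rightarrow> real \<Rightarrow> nat \<Rightarrow> (nat \<Rightarrow> 'a \<Rightarrow> real) \<Rightarrow> 'a set" where
  "ratio_event M c k X = {\<omega> \<in> space M. \<forall>i<k. \<forall>j<k. c * X i \<omega> < X j \<omega>}"

lemma ci_mode_miss_subset_ratio_events:
  assumes "0 \<le> t" "0 < r"
  shows "{\<omega> \<in> space M. \<theta>0 \<notin> ci_mode t k (\<lambda>j. \<theta> j \<omega>)}
    \<subseteq> ratio_event M (t / (1 + t)) k (\<lambda>j \<omega>. r * (\<theta> j \<omega> - \<theta>0))
      \<union> ratio_event M (t / (1 + t)) k (\<lambda>j \<omega>. - (r * (\<theta> j \<omega> - \<theta>0)))"
  using not_in_ci_mode_ratio_cases[OF assms] unfolding ratio_event_def by blast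

locale cdf_approximated_sample = prob_space +
  fixes A :: "'a set" and X :: "nat \<Rightarrow> 'a \<Rightarrow> real" and k :: nat
    and G :: "real \<Rightarrow> real" and \<delta> :: real
  assumes A_sets: "A \<in> sets M"
    and X_measurable: "\<And>j. j < k \<Longrightarrow> X j \<in> borel_measurable M"
    and prob_box: "\<And>S. (\<And>j. j < k \<Longrightarrow> S j \<in> sets borel) \<Longrightarrow>
      prob (A \<inter> {\<omega> \<in> space M. \<forall>j<k. X j \<omega> \<in> S j})
        = prob A * (\<Prod>j<k. prob {\<omega> \<in> space M. X j \<omega> \<in> S j})"
    and cdf_close: "\<And>j u. j < k \<Longrightarrow> \<bar>prob {\<omega> \<in> space M. X j \<omega> \<le> u} - G u\<bar> \<le> \<delta>"
    and G_continuous: "continuous_on UNIV G"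
    and G_at_top: "(G \<longlongrightarrow> 1) at_top"
    and G_concave: "concave_on {0..} G"
    and G_0_le_1: "G 0 \<le> 1"
    and k_pos: "0 < k"
begin

lemma delta_nonneg: "0 \<le> \<delta>"
  using cdf_close[OF k_pos] abs_ge_zero order_trans by blast

lemma sets_sample_in:
  assumes "j < k" "S \<in> sets borel"
  shows "{\<omega> \<in> space M. X j \<omega> \<in> S} \<in> sets M"
proof -
  have "X j -` S \<inter> space M \<in> sets M"
    using assms X_measurable by (intro measurable_sets) auto
  moreover have "X j -` S \<inter> space M = {\<omega> \<in> space M. X j \<omega> \<in> S}" by auto
  ultimately show ?thesis by simp
qed

lemma sets_box:
  assumes "\<And>j. j < k \<Longrightarrow> S j \<in> sets borel"
  shows "A \<inter> {\<omega> \<in> space M. \<forall>j<k. X j \<omega> \<in> S j} \<in> sets M"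
proof -
  have "{\<omega> \<in> space M. \<forall>j\<in>{..<k}. X j \<omega> \<in> S j} \<in> sets M"
  proof (rule sets.sets_Collect_finite_All)
    show "{\<omega> \<in> space M. X j \<omega> \<in> S j} \<in> sets M" if "j \<in> {..<k}" for j
      using that assms by (intro sets_sample_in) auto
  qed simp
  moreover have "{\<omega> \<in> space M. \<forall>j<k. X j \<omega> \<in> S j} = {\<omega> \<in> space M. \<forall>j\<in>{..<k}. X j \<omega> \<in> S j}"
    by auto
  ultimately show ?thesis using sets.Int[OF A_sets] by simp
qed

lemma sets_ratio_event: "A \<inter> ratio_event M c k X \<in> sets M"
proof -
  have "{\<omega> \<in> space M. c * X i \<omega> < X j \<omega>} \<in> sets M" if "i < k" "j < k" for i j
  proof -
    note [measurable] = X_measurable[OF that(1)] X_measurable[OF that(2)]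
    show ?thesis by measurable
  qed
  then have "{\<omega> \<in> space M. \<forall>i\<in>{..<k}. \<forall>j\<in>{..<k}. c * X i \<omega> < X j \<omega>} \<in> sets M"
    by (intro sets.sets_Collect_finite_All finite_lessThan) simp
  moreover have "ratio_event M c k X
      = {\<omega> \<in> space M. \<forall>i\<in>{..<k}. \<forall>j\<in>{..<k}. c * X i \<omega> < X j \<omega>}"
    by (auto simp: ratio_event_def)
  ultimately show ?thesis using sets.Int[OF A_sets] by simp
qed

end

locale cdf_grid = cdf_approximated_sample +
  fixes c :: real and N :: nat and x :: "nat \<Rightarrow> real"
  assumes c_nonneg: "0 \<le> c" and c_less_1: "c < 1"
    and N_pos: "0 < N" and x_0: "x 0 = 0" and x_mono: "mono_on {..<N} x"
    and G_x: "\<And>l. l < N \<Longrightarrow> G (x l) = G 0 + real l * ((1 - G 0) / real N)"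
begin

definition step :: real where
  "step = (1 - G 0) / real N"

definition level :: "nat \<Rightarrow> real" where
  "level l = G 0 + real l * step"

definition layer :: "nat \<Rightarrow> real set" where
  "layer l = grid_below N x l - grid_below N x (l - 1)"

definition band :: "nat \<Rightarrow> real set" where
  "band l = {c * x (l - 1)<..} \<inter> grid_below N x l"

definition below_error :: "nat \<Rightarrow> nat \<Rightarrow> real" where
  "below_error j l = prob {\<omega> \<in> space M. X j \<omega> \<in> grid_below N x l} - level l"

definition cell :: "nat \<Rightarrow> nat \<Rightarrow> 'a set" where
  "cell i l = A \<inter> {\<omega> \<in> space M. \<forall>j<k. X j \<omega> \<in> (if j = i then layer l else band l)}"

definition weight :: "nat \<Rightarrow> real" where
  "weight l = (2 * \<delta> + step + (1 - c) * real (l - 1) * step) ^ (k - 1)"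

lemma step_nonneg: "0 \<le> step"
  using G_0_le_1 N_pos by (simp add: step_def)

lemma level_N: "level N = 1"
  using N_pos by (simp add: level_def step_def)

lemma x_nonneg: "l < N \<Longrightarrow> 0 \<le> x l"
  using mono_onD[OF x_mono, of 0 l] x_0 N_pos by simp

lemma sets_grid_below: "grid_below N x l \<in> sets borel"
  by (simp add: grid_below_def)

lemma sets_layer: "layer l \<in> sets borel"
  by (simp add: layer_def grid_below_def)

lemma sets_band: "band l \<in> sets borel"
  by (simp add: band_def grid_below_def)

lemma prob_below_close:
  assumes "j < k" "l \<le> N"
  shows "\<bar>prob {\<omega> \<in> space M. X j \<omega> \<in> grid_below N x l} - level l\<bar> \<le> \<delta>"
proof (cases "l < N")
  case True
  then show ?thesis
    using cdf_close[OF assms(1), of "x l"] G_x[OF True] by (simp add: grid_below_def level_def step_def)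
next
  case False
  then have "l = N" using assms(2) by simp
  then show ?thesis
    using level_N delta_nonneg by (simp add: grid_below_def prob_space)
qed

lemma prob_band_le:
  assumes j: "j < k" and l: "1 \<le> l" "l \<le> N"
  shows "prob {\<omega> \<in> space M. X j \<omega> \<in> band l} \<le> 2 * \<delta> + step + (1 - c) * real (l - 1) * step"
proof -
  have x_prev: "0 \<le> x (l - 1)" "G (x (l - 1)) = level (l - 1)"
    using l x_nonneg G_x[of "l - 1"] by (auto simp: level_def step_def)
  have "c * x (l - 1) \<le> x (l - 1)"
    using x_prev c_less_1 c_nonneg by (intro mult_left_le_one_le) auto
  moreover have "l < N \<Longrightarrow> x (l - 1) \<le> x l"
    using mono_onD[OF x_mono, of "l - 1" l] by simp
  ultimately have below: "{..c * x (l - 1)} \<subseteq> grid_below N x l"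
    by (auto simp: grid_below_def)
  then have eq: "{\<omega> \<in> space M. X j \<omega> \<in> band l}
      = {\<omega> \<in> space M. X j \<omega> \<in> grid_below N x l} - {\<omega> \<in> space M. X j \<omega> \<in> {..c * x (l - 1)}}"
    by (auto simp: band_def)
  have "prob {\<omega> \<in> space M. X j \<omega> \<in> band l}
      = prob {\<omega> \<in> space M. X j \<omega> \<in> grid_below N x l} - prob {\<omega> \<in> space M. X j \<omega> \<in> {..c * x (l - 1)}}"
    unfolding eq
  proof (rule finite_measure_Diff)
    show "{\<omega> \<in> space M. X j \<omega> \<in> grid_below N x l} \<in> sets M"
      using j sets_grid_below by (rule sets_sample_in)
    show "{\<omega> \<in> space M. X j \<omega> \<in> {..c * x (l - 1)}} \<in> sets M"
      using j by (rule sets_sample_in) simp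
  qed (use below in auto)
  moreover have "G ((1 - c) *\<^sub>R 0 + c *\<^sub>R x (l - 1)) \<ge> (1 - c) * G 0 + c * G (x (l - 1))"
    using x_prev c_nonneg c_less_1 by (intro concave_onD[OF G_concave]) auto
  moreover have "level l - ((1 - c) * G 0 + c * level (l - 1)) = step + (1 - c) * real (l - 1) * step"
    using l by (simp add: level_def of_nat_diff algebra_simps)
  ultimately show ?thesis
    using prob_below_close[OF j l(2)] cdf_close[OF j, of "c * x (l - 1)"] x_prev
    by (simp add: abs_le_iff)
qed

lemma prob_cell_le:
  assumes i: "i < k" and l: "1 \<le> l" "l \<le> N"
  shows "prob (cell i l) \<le> prob A * (prob {\<omega> \<in> space M. X i \<omega> \<in> layer l} * weight l)"
proof -
  have "(\<Prod>j<k. prob {\<omega> \<in> space M. X j \<omega> \<in> (if j = i then layer l else band l)})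
      = prob {\<omega> \<in> space M. X i \<omega> \<in> layer l} * (\<Prod>j\<in>{..<k} - {i}. prob {\<omega> \<in> space M. X j \<omega> \<in> band l})"
    using i by (subst prod.remove[of _ i]) (auto intro!: prod.cong)
  also have "\<dots> \<le> prob {\<omega> \<in> space M. X i \<omega> \<in> layer l} * weight l"
  proof (intro mult_left_mono)
    have "(\<Prod>j\<in>{..<k} - {i}. prob {\<omega> \<in> space M. X j \<omega> \<in> band l})
        \<le> (\<Prod>j\<in>{..<k} - {i}. 2 * \<delta> + step + (1 - c) * real (l - 1) * step)"
      using prob_band_le l by (intro prod_mono) auto
    then show "(\<Prod>j\<in>{..<k} - {i}. prob {\<omega> \<in> space M. X j \<omega> \<in> band l}) \<le> weight l"
      using i by (simp add: weight_def)
  qed simp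
  finally show ?thesis
    using prob_box[of "\<lambda>j. if j = i then layer l else band l"] sets_layer sets_band
    by (simp add: cell_def mult_left_mono)
qed

lemma prob_layer_eq:
  assumes "i < k" "1 \<le> l"
  shows "prob {\<omega> \<in> space M. X i \<omega> \<in> layer l} = step + (below_error i l - below_error i (l - 1))"
proof -
  have "prob {\<omega> \<in> space M. X i \<omega> \<in> layer l}
      = prob {\<omega> \<in> space M. X i \<omega> \<in> grid_below N x l} - prob {\<omega> \<in> space M. X i \<omega> \<in> grid_below N x (l - 1)}"
    using grid_below_mono[OF x_mono, of "l - 1" l] sets_sample_in[OF assms(1) sets_grid_below]
    by (subst finite_measure_Diff[symmetric]) (auto simp: layer_def intro!: arg_cong[where f = prob])
  then show ?thesis
    using assms(2) by (simp add: below_error_def level_def of_nat_diff algebra_simps)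
qed

lemma layer_weight_sum_le:
  assumes i: "i < k"
  shows "(\<Sum>l=1..N. prob {\<omega> \<in> space M. X i \<omega> \<in> layer l} * weight l)
    \<le> ((1 - c) * (1 - G 0) + step + 2 * \<delta>) ^ k / ((1 - c) * real k)
      + \<delta> * ((1 - c) * (1 - G 0) + step + 2 * \<delta>) ^ (k - 1)"
proof -
  define W where "W = (1 - c) * (1 - G 0) + step + 2 * \<delta>"
  have W_eq: "2 * \<delta> + step + (1 - c) * real N * step = W"
    using N_pos by (simp add: W_def step_def)
  have "(\<Sum>l=1..N. prob {\<omega> \<in> space M. X i \<omega> \<in> layer l} * weight l)
      = (\<Sum>l=1..N. step * weight l) + (\<Sum>l=1..N. (below_error i l - below_error i (l - 1)) * weight l)"
    using prob_layer_eq[OF i] by (simp add: sum.distrib[symmetric] distrib_right)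
  also have "(\<Sum>l=1..N. step * weight l) \<le> W ^ k / ((1 - c) * real k)"
    unfolding weight_def W_eq[symmetric] using step_nonneg delta_nonneg c_less_1 k_pos
    by (intro sum_power_le_integral) auto
  also have "(\<Sum>l=1..N. (below_error i l - below_error i (l - 1)) * weight l)
      \<le> (below_error i N + \<delta>) * weight N"
  proof (rule summation_by_parts_le)
    show "- \<delta> \<le> below_error i l" if "l \<le> N" for l
      using prob_below_close[OF i that] by (simp add: below_error_def)
    show "weight l \<le> weight (Suc l)" for l
      unfolding weight_def using step_nonneg delta_nonneg c_less_1
      by (intro power_mono) (auto intro!: mult_right_mono)
  qed (use N_pos step_nonneg delta_nonneg in \<open>auto simp: weight_def\<close>)
  also have "(below_error i N + \<delta>) * weight N \<le> \<delta> * W ^ (k - 1)"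
  proof -
    have "below_error i N = 0"
      using level_N by (simp add: below_error_def grid_below_def prob_space)
    moreover have "weight N \<le> W ^ (k - 1)"
      unfolding weight_def W_eq[symmetric] using step_nonneg delta_nonneg c_less_1
      by (intro power_mono) (auto intro!: mult_right_mono)
    ultimately show ?thesis
      using delta_nonneg by (simp add: mult_left_mono)
  qed
  finally show ?thesis by (simp add: W_def)
qed

lemma sets_cell: "cell i l \<in> sets M"
  unfolding cell_def by (rule sets_box) (simp add: sets_layer sets_band)

lemma ratio_event_subset_cells:
  "A \<inter> ratio_event M c k X \<subseteq> (\<Union>(i, l)\<in>{..<k} \<times> {1..N}. cell i l)"
proof
  fix \<omega> assume "\<omega> \<in> A \<inter> ratio_event M c k X"
  then obtain i l where "i < k" "l \<in> {1..N}" "X i \<omega> \<notin> grid_below N x (l - 1)"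
    and "\<forall>j<k. X j \<omega> \<in> grid_below N x l \<and> c * x (l - 1) < X j \<omega>" "\<omega> \<in> A" "\<omega> \<in> space M"
    using ratio_event_grid_cover[of k c N x "\<lambda>j. X j \<omega>"] k_pos c_nonneg c_less_1 N_pos x_0
    by (auto simp: ratio_event_def)
  then have "\<omega> \<in> cell i l"
    by (auto simp: cell_def layer_def band_def)
  with \<open>i < k\<close> \<open>l \<in> {1..N}\<close> show "\<omega> \<in> (\<Union>(i, l)\<in>{..<k} \<times> {1..N}. cell i l)"
    by blast
qed

lemma prob_ratio_event_grid_le:
  "prob (A \<inter> ratio_event M c k X)
    \<le> prob A * ratio_event_bound k (1 - c) \<delta> (1 - G 0 + step / (1 - c))"
proof -
  define W where "W = (1 - c) * (1 - G 0) + step + 2 * \<delta>"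
  have W_eq: "(1 - c) * (1 - G 0 + step / (1 - c)) + 2 * \<delta> = W"
    using c_less_1 by (simp add: W_def field_simps)
  have "prob (A \<inter> ratio_event M c k X) \<le> (\<Sum>il\<in>{..<k} \<times> {1..N}. prob (case_prod cell il))"
    using ratio_event_subset_cells sets_cell
    by (intro order_trans[OF finite_measure_mono finite_measure_subadditive_finite]) auto
  also have "\<dots> = (\<Sum>i<k. \<Sum>l=1..N. prob (cell i l))"
    by (simp add: prod.case_distrib sum.cartesian_product)
  also have "\<dots> \<le> (\<Sum>i<k. prob A * (\<Sum>l=1..N. prob {\<omega> \<in> space M. X i \<omega> \<in> layer l} * weight l))"
    unfolding sum_distrib_left using prob_cell_le by (intro sum_mono) simp
  also have "\<dots> \<le> (\<Sum>i<k. prob A * (W ^ k / ((1 - c) * real k) + \<delta> * W ^ (k - 1)))"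
    using layer_weight_sum_le by (intro sum_mono mult_left_mono) (auto simp: W_def)
  also have "\<dots> = prob A * ratio_event_bound k (1 - c) \<delta> (1 - G 0 + step / (1 - c))"
    unfolding ratio_event_bound_def W_eq using c_less_1 k_pos by (simp add: field_simps)
  finally show ?thesis .
qed

end

lemma (in cdf_approximated_sample) prob_ratio_event_le:
  assumes c: "0 \<le> c" "c < 1"
  shows "prob (A \<inter> ratio_event M c k X)
    \<le> prob A * ratio_event_bound k (1 - c) \<delta> (1 - G 0)"
proof -
  have grid_bound: "prob (A \<inter> ratio_event M c k X)
      \<le> prob A * ratio_event_bound k (1 - c) \<delta> (1 - G 0 + (1 - G 0) / real n / (1 - c))"
    if n: "0 < n" for n
  proof -
    define h where "h = (1 - G 0) / real n"
    define s where "s l = G 0 + real l * h" for l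
    have "0 \<le> h"
      using G_0_le_1 by (simp add: h_def)
    then have "incseq s"
      by (auto simp: incseq_def s_def intro!: mult_right_mono)
    moreover have "s l < 1 \<or> s l = G 0" if "l \<le> n - 1" for l
    proof (cases "G 0 = 1")
      case False
      have "real l * h < real n * h"
        using that n False G_0_le_1 by (intro mult_strict_right_mono) (auto simp: h_def)
      then show ?thesis using n by (simp add: s_def h_def)
    qed (simp add: s_def h_def)
    ultimately obtain x where "x 0 = 0" "mono_on {..n - 1} x" "\<forall>l\<le>n - 1. G (x l) = s l"
      using continuous_level_grid[OF G_continuous G_at_top, of s "n - 1"] by (auto simp: s_def)
    moreover have "{..<n} = {..n - 1}" using n by auto
    ultimately interpret cdf_grid M A X k G \<delta> c n x
      using n c by unfold_locales (auto simp: s_def h_def)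
    show ?thesis
      using prob_ratio_event_grid_le by (simp add: step_def)
  qed
  have "(\<lambda>n. prob A * ratio_event_bound k (1 - c) \<delta> (1 - G 0 + (1 - G 0) / real n / (1 - c)))
      \<longlonglongrightarrow> prob A * ratio_event_bound k (1 - c) \<delta> (1 - G 0 + 0 / (1 - c))"
    unfolding ratio_event_bound_def by (intro tendsto_intros lim_const_over_n) (use c in auto)
  then show ?thesis
    using grid_bound by (intro LIMSEQ_le_const) (auto intro!: exI[of _ 1])
qed

lemma (in cdf_approximated_sample) reflected_sample:
  assumes atomless: "\<And>j x. j < k \<Longrightarrow> prob {\<omega> \<in> space M. X j \<omega> = x} = 0"
    and G_bot: "(G \<longlongrightarrow> 0) at_bot" and G_conv: "convex_on {..0} G" and "0 \<le> G 0"
  shows "cdf_approximated_sample M A (\<lambda>j \<omega>. - X j \<omega>) k (\<lambda>u. 1 - G (- u)) \<delta>"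
proof unfold_locales
  show "(\<lambda>\<omega>. - X j \<omega>) \<in> borel_measurable M" if "j < k" for j
    using X_measurable[OF that] by simp
  show "prob (A \<inter> {\<omega> \<in> space M. \<forall>j<k. - X j \<omega> \<in> S j})
      = prob A * (\<Prod>j<k. prob {\<omega> \<in> space M. - X j \<omega> \<in> S j})"
    if S: "\<And>j. j < k \<Longrightarrow> S j \<in> sets borel" for S
  proof -
    have "(uminus :: real \<Rightarrow> real) -` S j \<in> sets borel" if "j < k" for j
      using S[OF that] by (intro measurable_sets_borel[OF borel_measurable_uminus]) auto
    then show ?thesis
      using prob_box[of "\<lambda>j. uminus -` S j"] by simp
  qed
  show "\<bar>prob {\<omega> \<in> space M. - X j \<omega> \<le> u} - (1 - G (- u))\<bar> \<le> \<delta>" if "j < k" for j u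
    using prob_uminus_le[OF X_measurable[OF that] atomless[OF that]] cdf_close[OF that, of "- u"]
    by (simp add: abs_minus_commute)
qed (use A_sets reflected_cdf[OF G_continuous G_bot G_conv] G_0_le_1 \<open>0 \<le> G 0\<close> k_pos in auto)

section \<open>Coverage of the unimodal HulC interval\<close>

lemma (in prob_space) indep_vars_prob_box:
  fixes U :: "'a \<Rightarrow> real" and \<theta> :: "nat \<Rightarrow> 'a \<Rightarrow> real" and f :: "real \<Rightarrow> real"
  assumes indep: "indep_vars (\<lambda>_. borel) (\<lambda>i. case i of None \<Rightarrow> U | Some j \<Rightarrow> \<theta> j) (insert None (Some ` {..<k}))"
    and f: "f \<in> borel_measurable borel" and V: "V \<in> sets borel"
    and S: "\<And>j. j < k \<Longrightarrow> S j \<in> sets borel"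
  shows "prob ({\<omega> \<in> space M. U \<omega> \<in> V} \<inter> {\<omega> \<in> space M. \<forall>j<k. f (\<theta> j \<omega>) \<in> S j})
    = prob {\<omega> \<in> space M. U \<omega> \<in> V} * (\<Prod>j<k. prob {\<omega> \<in> space M. f (\<theta> j \<omega>) \<in> S j})"
proof -
  let ?Y = "\<lambda>i. case i of None \<Rightarrow> U | Some j \<Rightarrow> \<theta> j"
  let ?I = "insert None (Some ` {..<k})"
  define E where "E i = (case i of None \<Rightarrow> U -` V \<inter> space M | Some j \<Rightarrow> \<theta> j -` (f -` S j) \<inter> space M)" for i
  have "prob (\<Inter>i\<in>?I. E i) = (\<Prod>i\<in>?I. prob (E i))"
  proof (rule indep_setsD)
    show "indep_sets (\<lambda>i. {?Y i -` B \<inter> space M | B. B \<in> sets borel}) ?I"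
      using indep unfolding indep_vars_def2 by auto
    show "\<forall>i\<in>?I. E i \<in> {?Y i -` B \<inter> space M | B. B \<in> sets borel}"
      using V S measurable_sets[OF f] by (auto simp: E_def)
  qed auto
  moreover have "(\<Inter>i\<in>?I. E i) = {\<omega> \<in> space M. U \<omega> \<in> V} \<inter> {\<omega> \<in> space M. \<forall>j<k. f (\<theta> j \<omega>) \<in> S j}"
    by (auto simp: E_def)
  moreover have "(\<Prod>i\<in>?I. prob (E i)) = prob (E None) * (\<Prod>j<k. prob (E (Some j)))"
    by (simp add: prod.reindex inj_on_def)
  ultimately show ?thesis
    by (simp add: E_def vimage_def Int_def conj_commute)
qed

lemma (in prob_space) indep_vars_option_measurable:
  assumes "indep_vars (\<lambda>_. borel) (\<lambda>i. case i of None \<Rightarrow> U | Some j \<Rightarrow> \<theta> j) (insert None (Some ` {..<k}))"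
  shows "U \<in> borel_measurable M" and "\<And>j. j < k \<Longrightarrow> \<theta> j \<in> borel_measurable M"
proof -
  have rv: "random_variable borel (case i of None \<Rightarrow> U | Some j \<Rightarrow> \<theta> j)"
    if "i \<in> insert None (Some ` {..<k})" for i
    using assms that unfolding indep_vars_def2 by blast
  show "U \<in> borel_measurable M"
    using rv[of None] by simp
  show "\<theta> j \<in> borel_measurable M" if "j < k" for j
    using rv[of "Some j"] that by simp
qed

lemma (in prob_space) indep_vars_cdf_approximated_sample:
  fixes U :: "'a \<Rightarrow> real" and \<theta> :: "nat \<Rightarrow> 'a \<Rightarrow> real" and f :: "real \<Rightarrow> real"
  assumes indep: "indep_vars (\<lambda>_. borel) (\<lambda>i. case i of None \<Rightarrow> U | Some j \<Rightarrow> \<theta> j) (insert None (Some ` {..<k}))"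
    and V: "V \<in> sets borel" and f: "f \<in> borel_measurable borel" and "0 < k"
    and approx: "\<And>j u. j < k \<Longrightarrow> \<bar>prob {\<omega> \<in> space M. f (\<theta> j \<omega>) \<le> u} - G u\<bar> \<le> \<delta>"
    and "continuous_on UNIV G" "(G \<longlongrightarrow> 1) at_top" "concave_on {0..} G" "G 0 \<le> 1"
  shows "cdf_approximated_sample M {\<omega> \<in> space M. U \<omega> \<in> V} (\<lambda>j \<omega>. f (\<theta> j \<omega>)) k G \<delta>"
proof unfold_locales
  note [measurable] = indep_vars_option_measurable(1)[OF indep] f
  show "{\<omega> \<in> space M. U \<omega> \<in> V} \<in> sets M"
    using V by measurable
  show "(\<lambda>\<omega>. f (\<theta> j \<omega>)) \<in> borel_measurable M" if "j < k" for j
    using indep_vars_option_measurable(2)[OF indep that] f by measurable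
qed (use indep_vars_prob_box[OF indep f V] assms in auto)

lemma (in prob_space) cdf_atomless:
  fixes W :: "'a \<Rightarrow> real"
  assumes W: "W \<in> borel_measurable M" and atomless: "\<And>x. prob {w \<in> space M. W w = x} = 0"
  shows "continuous_on UNIV (\<lambda>u. prob {w \<in> space M. W w \<le> u})"
    and "((\<lambda>u. prob {w \<in> space M. W w \<le> u}) \<longlongrightarrow> 1) at_top"
    and "((\<lambda>u. prob {w \<in> space M. W w \<le> u}) \<longlongrightarrow> 0) at_bot"
proof -
  interpret D: real_distribution "distr M borel W"
    using W by simp
  have cdf_eq: "(\<lambda>u. prob {w \<in> space M. W w \<le> u}) = cdf (distr M borel W)"
  proof
    fix u
    have "{w \<in> space M. W w \<le> u} = W -` {..u} \<inter> space M" by auto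
    then show "prob {w \<in> space M. W w \<le> u} = cdf (distr M borel W) u"
      unfolding cdf_def using W by (simp add: measure_distr)
  qed
  have "measure (distr M borel W) {x} = 0" for x
  proof -
    have "{w \<in> space M. W w = x} = W -` {x} \<inter> space M" by auto
    then show ?thesis using W atomless[of x] by (simp add: measure_distr)
  qed
  then show "continuous_on UNIV (\<lambda>u. prob {w \<in> space M. W w \<le> u})"
    unfolding cdf_eq by (intro continuous_at_imp_continuous_on ballI) (simp add: D.isCont_cdf)
  show "((\<lambda>u. prob {w \<in> space M. W w \<le> u}) \<longlongrightarrow> 1) at_top"
    unfolding cdf_eq by (rule D.cdf_lim_at_top_prob)
  show "((\<lambda>u. prob {w \<in> space M. W w \<le> u}) \<longlongrightarrow> 0) at_bot"
    unfolding cdf_eq by (rule D.cdf_lim_at_bot)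
qed

lemma (in prob_space) prob_ci_mode_miss_le_ratio_bounds:
  fixes U :: "'a \<Rightarrow> real" and \<theta> :: "nat \<Rightarrow> 'a \<Rightarrow> real" and G :: "real \<Rightarrow> real"
  assumes indep: "indep_vars (\<lambda>_. borel) (\<lambda>i. case i of None \<Rightarrow> U | Some j \<Rightarrow> \<theta> j) (insert None (Some ` {..<k}))"
    and atomless: "\<And>j x. j < k \<Longrightarrow> prob {\<omega> \<in> space M. \<theta> j \<omega> = x} = 0"
    and "0 < k" "0 < r" "0 \<le> t" and V: "V \<in> sets borel"
    and G_cont: "continuous_on UNIV G" and G_top: "(G \<longlongrightarrow> 1) at_top" and G_bot: "(G \<longlongrightarrow> 0) at_bot"
    and G_conv: "convex_on {..0} G" and G_conc: "concave_on {0..} G" and G_0: "0 \<le> G 0" "G 0 \<le> 1"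
    and approx: "\<And>j u. j < k \<Longrightarrow> \<bar>prob {\<omega> \<in> space M. r * (\<theta> j \<omega> - \<theta>0) \<le> u} - G u\<bar> \<le> \<delta>"
  shows "prob {\<omega> \<in> space M. U \<omega> \<in> V \<and> \<theta>0 \<notin> ci_mode t k (\<lambda>j. \<theta> j \<omega>)}
    \<le> prob {\<omega> \<in> space M. U \<omega> \<in> V}
      * (ratio_event_bound k (1 / (1 + t)) \<delta> (1 - G 0) + ratio_event_bound k (1 / (1 + t)) \<delta> (G 0))"
proof -
  let ?A = "{\<omega> \<in> space M. U \<omega> \<in> V}"
  define X where "X j \<omega> = r * (\<theta> j \<omega> - \<theta>0)" for j \<omega>
  define c where "c = t / (1 + t)"
  have c: "0 \<le> c" "c < 1" "1 - c = 1 / (1 + t)"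
    using \<open>0 \<le> t\<close> by (auto simp: c_def field_simps)
  interpret pos: cdf_approximated_sample M ?A X k G \<delta>
    unfolding X_def using approx G_cont G_top G_conc G_0 \<open>0 < k\<close>
    by (intro indep_vars_cdf_approximated_sample[OF indep V]) auto
  have "{\<omega> \<in> space M. X j \<omega> = x} = {\<omega> \<in> space M. \<theta> j \<omega> = \<theta>0 + x / r}" for j x
    using \<open>0 < r\<close> by (auto simp: X_def field_simps)
  then interpret neg: cdf_approximated_sample M ?A "\<lambda>j \<omega>. - X j \<omega>" k "\<lambda>u. 1 - G (- u)" \<delta>
    using atomless G_bot G_conv G_0 by (intro pos.reflected_sample) auto
  have "{\<omega> \<in> space M. U \<omega> \<in> V \<and> \<theta>0 \<notin> ci_mode t k (\<lambda>j. \<theta> j \<omega>)}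
      \<subseteq> (?A \<inter> ratio_event M c k X) \<union> (?A \<inter> ratio_event M c k (\<lambda>j \<omega>. - X j \<omega>))"
    using ci_mode_miss_subset_ratio_events[OF \<open>0 \<le> t\<close> \<open>0 < r\<close>, of M \<theta>0 k \<theta>]
    unfolding X_def c_def by blast
  then have "prob {\<omega> \<in> space M. U \<omega> \<in> V \<and> \<theta>0 \<notin> ci_mode t k (\<lambda>j. \<theta> j \<omega>)}
      \<le> prob (?A \<inter> ratio_event M c k X) + prob (?A \<inter> ratio_event M c k (\<lambda>j \<omega>. - X j \<omega>))"
    using pos.sets_ratio_event neg.sets_ratio_event
    by (intro order_trans[OF finite_measure_mono measure_Un_le]) auto
  also have "\<dots> \<le> prob ?A * (ratio_event_bound k (1 - c) \<delta> (1 - G 0) + ratio_event_bound k (1 - c) \<delta> (G 0))"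
    using pos.prob_ratio_event_le[OF c(1,2)] neg.prob_ratio_event_le[OF c(1,2)]
    by (simp add: distrib_left)
  finally show ?thesis using c(3) by simp
qed

lemma prob_ci_mode_miss_le:
  fixes M :: "'a measure" and N :: "'b measure" and U :: "'a \<Rightarrow> real"
    and \<theta> :: "nat \<Rightarrow> 'a \<Rightarrow> real" and W :: "'b \<Rightarrow> real" and k B :: nat
  assumes M: "prob_space M" and N: "prob_space N"
    and "0 \<le> t" "0 < r" "0 \<le> \<delta>" "1 \<le> k" "k \<le> B" and small: "10 * real B * (1 + t) * \<delta> < 1"
    and indep: "prob_space.indep_vars M (\<lambda>_. borel)
      (\<lambda>i. case i of None \<Rightarrow> U | Some j \<Rightarrow> \<theta> j) (insert None (Some ` {..<k}))"
    and atomless: "\<And>j x. j < k \<Longrightarrow> measure M {\<omega> \<in> space M. \<theta> j \<omega> = x} = 0"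
    and W_meas: "W \<in> borel_measurable N"
    and W_atomless: "\<And>x. measure N {w \<in> space N. W w = x} = 0"
    and W_unimodal: "unimodal_at_0 N W"
    and Delta_W: "\<Delta> = \<bar>1/2 - measure N {w \<in> space N. W w \<le> 0}\<bar>"
    and approx: "\<And>j u. j < k \<Longrightarrow>
      \<bar>measure M {\<omega> \<in> space M. r * (\<theta> j \<omega> - \<theta>0) \<le> u} - measure N {w \<in> space N. W w \<le> u}\<bar> \<le> \<delta>"
    and V: "V \<in> sets borel"
  shows "measure M {\<omega> \<in> space M. U \<omega> \<in> V \<and> \<theta>0 \<notin> ci_mode t k (\<lambda>j. \<theta> j \<omega>)}
    \<le> measure M {\<omega> \<in> space M. U \<omega> \<in> V} * (hulcQ k t \<Delta> / (1 - 10 * real B * (1 + t) * \<delta>))"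
proof -
  interpret M: prob_space M by fact
  interpret N: prob_space N by fact
  define G where "G = (\<lambda>u. measure N {w \<in> space N. W w \<le> u})"
  have G_shape: "convex_on {..0} G" "concave_on {0..} G"
    using W_unimodal by (simp_all add: unimodal_at_0_def Let_def G_def)
  have G_0: "0 \<le> G 0" "G 0 \<le> 1"
    by (simp_all add: G_def)
  have approx_G: "\<bar>measure M {\<omega> \<in> space M. r * (\<theta> j \<omega> - \<theta>0) \<le> u} - G u\<bar> \<le> \<delta>" if "j < k" for j u
    using approx[OF that] by (simp add: G_def)
  have "measure M {\<omega> \<in> space M. U \<omega> \<in> V \<and> \<theta>0 \<notin> ci_mode t k (\<lambda>j. \<theta> j \<omega>)}
      \<le> measure M {\<omega> \<in> space M. U \<omega> \<in> V}
        * (ratio_event_bound k (1 / (1 + t)) \<delta> (1 - G 0) + ratio_event_bound k (1 / (1 + t)) \<delta> (G 0))"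
    using M.prob_ci_mode_miss_le_ratio_bounds[OF indep atomless _ \<open>0 < r\<close> \<open>0 \<le> t\<close> V
        N.cdf_atomless[OF W_meas W_atomless, folded G_def] G_shape G_0 approx_G] \<open>1 \<le> k\<close>
    by simp
  also have "\<dots> \<le> measure M {\<omega> \<in> space M. U \<omega> \<in> V} * (hulcQ k t \<Delta> / (1 - 10 * real B * (1 + t) * \<delta>))"
    using Delta_W G_0 assms(3,5-8)
    by (intro mult_left_mono ratio_event_bound_pair_le_hulcQ) (simp_all add: G_def)
  finally show ?thesis .
qed

lemma sets_ci_mode_miss:
  fixes \<theta> :: "nat \<Rightarrow> 'a \<Rightarrow> real"
  assumes "\<And>j. j < k \<Longrightarrow> \<theta> j \<in> borel_measurable M"
  shows "{\<omega> \<in> space M. \<theta>0 \<notin> ci_mode t k (\<lambda>j. \<theta> j \<omega>)} \<in> sets M"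
proof -
  have [measurable]: "(\<lambda>\<omega>. est_max k (\<lambda>j. \<theta> j \<omega>)) \<in> borel_measurable M"
    "(\<lambda>\<omega>. est_min k (\<lambda>j. \<theta> j \<omega>)) \<in> borel_measurable M"
    unfolding est_max_def est_min_def using assms
    by (intro borel_measurable_Max borel_measurable_Min; simp)+
  show ?thesis
    unfolding ci_mode_def atLeastAtMost_iff by measurable
qed

lemma (in prob_space) prob_randomized_choice_le:
  fixes U :: "'a \<Rightarrow> real" and E :: "nat \<Rightarrow> 'a \<Rightarrow> bool"
  assumes U_meas: "U \<in> borel_measurable M"
    and U_unif: "distr M lborel U = uniform_measure lborel {0..1}"
    and "0 \<le> \<eta>" "\<eta> \<le> 1"
    and E_sets: "\<And>k. k \<in> {k1, k2} \<Longrightarrow> {\<omega> \<in> space M. E k \<omega>} \<in> sets M"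
    and bound: "\<And>k V. k \<in> {k1, k2} \<Longrightarrow> V \<in> sets borel \<Longrightarrow>
      prob {\<omega> \<in> space M. U \<omega> \<in> V \<and> E k \<omega>} \<le> prob {\<omega> \<in> space M. U \<omega> \<in> V} * q k"
  shows "prob {\<omega> \<in> space M. E (if U \<omega> \<le> \<eta> then k1 else k2) \<omega>} \<le> \<eta> * q k1 + (1 - \<eta>) * q k2"
proof -
  note [measurable] = U_meas
  have prob_U: "prob {\<omega> \<in> space M. U \<omega> \<in> V} = measure lborel ({0..1} \<inter> V)" if "V \<in> sets borel" for V
  proof -
    have "prob {\<omega> \<in> space M. U \<omega> \<in> V} = measure (distr M lborel U) V"
      using that by (subst measure_distr) (auto simp: vimage_def Int_def conj_commute)
    then show ?thesis
      unfolding U_unif using that by (simp add: measure_uniform_measure)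
  qed
  have "{0..1} \<inter> {..\<eta>} = {0..\<eta>}" "{0..1} \<inter> {\<eta><..} = {\<eta><..1}"
    using assms(3,4) by auto
  then have "prob {\<omega> \<in> space M. U \<omega> \<in> {..\<eta>}} = \<eta>" "prob {\<omega> \<in> space M. U \<omega> \<in> {\<eta><..}} = 1 - \<eta>"
    using prob_U[of "{..\<eta>}"] prob_U[of "{\<eta><..}"] assms(3,4) by simp_all
  moreover have event_sets: "{\<omega> \<in> space M. U \<omega> \<in> V \<and> E k \<omega>} \<in> sets M"
    if "k \<in> {k1, k2}" "V \<in> sets borel" for k V
    using E_sets[OF that(1)] that(2) by measurable
  moreover have "{\<omega> \<in> space M. E (if U \<omega> \<le> \<eta> then k1 else k2) \<omega>}
      = {\<omega> \<in> space M. U \<omega> \<in> {..\<eta>} \<and> E k1 \<omega>} \<union> {\<omega> \<in> space M. U \<omega> \<in> {\<eta><..} \<and> E k2 \<omega>}"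
    by auto
  ultimately show ?thesis
    using measure_Un_le[OF event_sets event_sets, of k1 "{..\<eta>}" k2 "{\<eta><..}"]
      bound[of k1 "{..\<eta>}"] bound[of k2 "{\<eta><..}"]
    by (simp add: mult.commute)
qed

theorem theorem4:
  fixes M :: "'a measure" and N :: "'b measure"
    and U :: "'a \<Rightarrow> real"
    and \<theta>hat :: "nat \<Rightarrow> nat \<Rightarrow> 'a \<Rightarrow> real"
    and W :: "'b \<Rightarrow> real"
    and \<alpha> t \<Delta> \<theta>0 r \<delta> :: real
  assumes "0 < \<alpha>" "\<alpha> < 1" "0 \<le> t" "0 \<le> \<Delta>" "\<Delta> \<le> 1/2" "0 < t \<or> \<Delta> < 1/2"
    and "prob_space M"
    and U_unif: "distr M lborel U = uniform_measure lborel {0..1}"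
    and indep: "\<And>k. k \<in> {hulcB \<alpha> t \<Delta> - 1, hulcB \<alpha> t \<Delta>} \<Longrightarrow>
        prob_space.indep_vars M (\<lambda>_. borel)
          (\<lambda>i. case i of None \<Rightarrow> U | Some j \<Rightarrow> \<theta>hat k j) (insert None (Some ` {..<k}))"
    and cont: "\<And>k j x. k \<in> {hulcB \<alpha> t \<Delta> - 1, hulcB \<alpha> t \<Delta>} \<Longrightarrow> j < k \<Longrightarrow>
        measure M {\<omega> \<in> space M. \<theta>hat k j \<omega> = x} = 0"
    and "prob_space N" and W_meas: "W \<in> borel_measurable N"
    and W_cont: "\<And>x. measure N {w \<in> space N. W w = x} = 0"
    and W_unimodal: "unimodal_at_0 N W"
    and Delta_W: "\<Delta> = \<bar>1/2 - measure N {w \<in> space N. W w \<le> 0}\<bar>"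
    and "0 < r" "0 \<le> \<delta>"
    and approx: "\<And>k j u. k \<in> {hulcB \<alpha> t \<Delta> - 1, hulcB \<alpha> t \<Delta>} \<Longrightarrow> j < k \<Longrightarrow>
        \<bar>measure M {\<omega> \<in> space M. r * (\<theta>hat k j \<omega> - \<theta>0) \<le> u}
           - measure N {w \<in> space N. W w \<le> u}\<bar> \<le> \<delta>"
  shows "1 - 10 * real (hulcB \<alpha> t \<Delta>) * (1 + t) * \<delta> > 0 \<longrightarrow>
    measure M {\<omega> \<in> space M.
       \<theta>0 \<notin> ci_mode t (hulc_Bstar \<alpha> t \<Delta> (U \<omega>)) (\<lambda>j. \<theta>hat (hulc_Bstar \<alpha> t \<Delta> (U \<omega>)) j \<omega>)}
    \<le> \<alpha> / (1 - 10 * real (hulcB \<alpha> t \<Delta>) * (1 + t) * \<delta>)"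
proof
  let ?B = "hulcB \<alpha> t \<Delta>" and ?\<eta> = "hulc_eta \<alpha> t \<Delta>"
    and ?D = "1 - 10 * real (hulcB \<alpha> t \<Delta>) * (1 + t) * \<delta>"
  define miss where "miss k \<omega> \<longleftrightarrow> \<theta>0 \<notin> ci_mode t k (\<lambda>j. \<theta>hat k j \<omega>)" for k \<omega>
  assume "0 < ?D"
  interpret prob_space M by fact
  have B: "2 \<le> ?B" "hulcQ ?B t \<Delta> \<le> \<alpha>" "\<alpha> < hulcQ (?B - 1) t \<Delta>"
    using hulcB_bounds[OF assms(1-6)] by simp_all
  have "prob {\<omega> \<in> space M. miss (if U \<omega> \<le> ?\<eta> then ?B else ?B - 1) \<omega>}
      \<le> ?\<eta> * (hulcQ ?B t \<Delta> / ?D) + (1 - ?\<eta>) * (hulcQ (?B - 1) t \<Delta> / ?D)"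
  proof (rule prob_randomized_choice_le)
    show "prob {\<omega> \<in> space M. U \<omega> \<in> V \<and> miss k \<omega>} \<le> prob {\<omega> \<in> space M. U \<omega> \<in> V} * (hulcQ k t \<Delta> / ?D)"
      if "k \<in> {?B, ?B - 1}" "V \<in> sets borel" for k V
      unfolding miss_def using that B(1) \<open>0 < ?D\<close>
      by (intro prob_ci_mode_miss_le[OF assms(7,11,3,16,17) _ _ _ indep cont W_meas W_cont W_unimodal
          Delta_W approx]) auto
    show "{\<omega> \<in> space M. miss k \<omega>} \<in> sets M" if "k \<in> {?B, ?B - 1}" for k
      unfolding miss_def using that indep_vars_option_measurable(2)[OF indep]
      by (intro sets_ci_mode_miss) auto
    show "U \<in> borel_measurable M"
      using indep_vars_option_measurable(1)[OF indep, of ?B] by simp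
  qed (use U_unif hulc_eta_mixture[OF B(2,3)] in auto)
  also have "\<dots> = \<alpha> / ?D"
    using hulc_eta_mixture(3)[OF B(2,3)] by (simp add: add_divide_distrib[symmetric])
  finally show "prob {\<omega> \<in> space M. \<theta>0 \<notin> ci_mode t (hulc_Bstar \<alpha> t \<Delta> (U \<omega>))
      (\<lambda>j. \<theta>hat (hulc_Bstar \<alpha> t \<Delta> (U \<omega>)) j \<omega>)} \<le> \<alpha> / ?D"
    by (simp only: miss_def[abs_def] hulc_Bstar_def)
qed

end
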